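(* Let $\Omega\subset\mathbb{R}^n$ ($n\ge2$) be open bounded, $r_0>0$, $\alpha\in[0,n)$, and let $\mathcal{F},\mathcal{G}\in L^1(\Omega;\mathbb{R}^+)$ satisfy the local comparison $(A2_2)$ with constant $\tilde c$ and the global comparison $\fint_\Omega\mathcal{G}\le C_*\fint_\Omega\mathcal{F}$. Then for every $\varepsilon\in(0,1)$ one can find $\sigma_0=\sigma_0(n,\tilde c)>0$ and $\kappa=\kappa(\varepsilon)\in(0,\varepsilon)$ such that: if for some $\xi\in\Omega$ and $\varrho,\lambda>0$ there are $z_1,z_2\in\Omega_\varrho(\xi)$ with $\mathbf{M}_\alpha\mathcal{G}(z_1)\le\lambda$ and $\mathbf{M}_\alpha\mathcal{F}(z_2)\le\kappa\lambda$, then for all $\sigma>\sigma_0$, $$d^\alpha_{\mathcal{G}}(\Omega_\varrho(\xi);\sigma\lambda)\le C\Big(\frac\varepsilon\sigma\Big)^{\frac n{n-\alpha}}\varrho^n,$$ where $C=C(n,\alpha,\tilde c)>0$.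
   Context: Functions on $\Omega$ are extended by zero outside $\Omega$. $B_\rho(x)$ open ball, $\Omega_\rho(x)=B_\rho(x)\cap\Omega$, $\fint$ averages. $\mathbf{M}_\alpha f(x)=\sup_{\rho>0}\rho^\alpha\fint_{B_\rho(x)}|f|$, $d^\alpha_{\mathcal{G}}(E;\lambda)=\mathcal{L}^n(\{x\in E:\mathbf{M}_\alpha\mathcal{G}(x)>\lambda\})$. $(\mathcal{G},\varphi,\psi)\in\mathrm{Q}(B)$ with constant $\tilde c\ge1$ means $\mathcal{G}\le\tilde c(\varphi+\psi)$, $\varphi\le\tilde c(\mathcal{G}+\psi)$, $\psi\le\tilde c(\mathcal{G}+\varphi)$ in $B$. $(A2_2)$: for every $\nu\in\overline\Omega$, $r\in(0,r_0/2]$ there are measurable $\varphi,\psi$ on $\Omega_r(\nu)$ with $(\mathcal{G},\varphi,\psi)\in\mathrm{Q}(B_r(\nu))$ with constant $\tilde c$, $\fint_{B_r(\nu)}\psi\le\varepsilon\fint_{B_{2r}(\nu)}\mathcal{G}+c_\varepsilon\fint_{B_{2r}(\nu)}\mathcal{F}$ for all $\varepsilon\in(0,1)$ ($c_\varepsilon>0$ depending only on $\varepsilon$), and $\|\varphi\|_{L^\infty(B_r(\nu))}\le C\fint_{B_{2r}(\nu)}(\mathcal{G}+\mathcal{F})$ with $C$ independent of $\nu,r$. *)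

theory Defs
  imports "HOL-Analysis.Analysis"
begin

definition favg :: "('n::euclidean_space) set \<Rightarrow> ('n \<Rightarrow> real) \<Rightarrow> real" where
  "favg B f = (LINT x:B|lebesgue. f x) / measure lebesgue B"

definition frac_max :: "real \<Rightarrow> ('n::euclidean_space \<Rightarrow> real) \<Rightarrow> 'n \<Rightarrow> ereal" where
  "frac_max \<alpha> f x = (SUP \<rho>\<in>{0<..}. ereal (\<rho> powr \<alpha> * favg (ball x \<rho>) (\<lambda>y. \<bar>f y\<bar>)))"

definition dist_fn :: "real \<Rightarrow> ('n::euclidean_space \<Rightarrow> real) \<Rightarrow> 'n set \<Rightarrow> real \<Rightarrow> ennreal" where
  "dist_fn \<alpha> G E lam = emeasure lebesgue {x\<in>E. frac_max \<alpha> G x > ereal lam}"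

text \<open>The comparison class Q(B): (G, phi, psi) in Q(B) with constant c, on the set S
  (here S = Omega \<inter> B, the domain of phi, psi), required almost everywhere.\<close>
definition compQ :: "('n::euclidean_space \<Rightarrow> real) \<Rightarrow> ('n \<Rightarrow> real) \<Rightarrow> ('n \<Rightarrow> real) \<Rightarrow> 'n set \<Rightarrow> real \<Rightarrow> bool" where
  "compQ G \<phi> \<psi> S c \<longleftrightarrow>
     (AE x in lebesgue. x \<in> S \<longrightarrow>
        G x \<le> c * (\<phi> x + \<psi> x) \<and> \<phi> x \<le> c * (G x + \<psi> x) \<and> \<psi> x \<le> c * (G x + \<phi> x))"

definition A2_2 :: "'n::euclidean_space set \<Rightarrow> real \<Rightarrow> ('n \<Rightarrow> real) \<Rightarrow> ('n \<Rightarrow> real)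
                    \<Rightarrow> real \<Rightarrow> real \<Rightarrow> (real \<Rightarrow> real) \<Rightarrow> bool" where
  "A2_2 \<Omega> r0 F G ct CA ceps \<longleftrightarrow>
     (\<forall>e\<in>{0<..<1}. ceps e > 0) \<and>
     (\<forall>\<nu>\<in>closure \<Omega>. \<forall>r\<in>{0<..r0/2}.
        \<exists>\<phi> \<psi>. \<phi> \<in> borel_measurable lebesgue \<and> \<psi> \<in> borel_measurable lebesgue \<and>
          (AE x in lebesgue. x \<in> \<Omega> \<inter> ball \<nu> r \<longrightarrow> \<phi> x \<ge> 0 \<and> \<psi> x \<ge> 0) \<and>
          compQ G \<phi> \<psi> (\<Omega> \<inter> ball \<nu> r) ct \<and>
          (\<forall>e\<in>{0<..<1}.
             favg (ball \<nu> r) (\<lambda>x. indicator \<Omega> x * \<psi> x)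
               \<le> e * favg (ball \<nu> (2*r)) G + ceps e * favg (ball \<nu> (2*r)) F) \<and>
          (AE x in lebesgue. x \<in> \<Omega> \<inter> ball \<nu> r \<longrightarrow>
             \<bar>\<phi> x\<bar> \<le> CA * favg (ball \<nu> (2*r)) (\<lambda>y. G y + F y)))"

end

theory Submission
  imports Defs
begin

(* A good-lambda argument resting on the weak-type estimate for the fractional maximal function:
   if each point of S is the centre of a ball B(x,r) with t |B_1| r^(n-alpha) < int_B(x,r) |f|,
   then by the Vitali covering lemma and superadditivity of s |-> s^q, q = n/(n-alpha) >= 1,
   |S| <= 5^n |B_1| (||f||_1 / (t |B_1|))^q.
   For rho <= r0/4, the bound M_alpha G(z1) <= lambda excludes radii >= rho at the points of the
   level set, and on B(xi, 2 rho) assumption (A2_2) bounds G by a constant of size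
   lambda rho^-alpha plus a function psi with ||psi||_1 <= eps 10^n lambda |B_1| rho^(n-alpha);
   the weak-type estimate for psi gives the claim once sigma is large.
   For rho > r0/4 the weak-type estimate is applied to G itself, with kappa so small, relative
   to ||F||_1 and ||G||_1, that M_alpha F(z2) <= kappa lambda forces
   ||G||_1 <= eps lambda |B_1| rho^(n-alpha). *)

section \<open>Averages over balls and the fractional maximal function\<close>

lemma measure_lebesgue_ball:
  fixes c :: "'a::euclidean_space"
  assumes "r \<ge> 0"
  shows "measure lebesgue (ball c r) = unit_ball_vol DIM('a) * r ^ DIM('a)"
  using content_ball[OF assms, of c] by (simp add: measure_completion)

lemma emeasure_lebesgue_ball:
  fixes c :: "'a::euclidean_space"
  assumes "r \<ge> 0"
  shows "emeasure lebesgue (ball c r) = ennreal (unit_ball_vol DIM('a) * r ^ DIM('a))"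
  using emeasure_ball[OF assms, of c] by (simp add: emeasure_completion)

lemma favg_ball:
  fixes x :: "'a::euclidean_space"
  assumes "r > 0"
  shows "favg (ball x r) f = (LINT y:ball x r|lebesgue. f y) / (unit_ball_vol DIM('a) * r ^ DIM('a))"
  unfolding favg_def using measure_lebesgue_ball[of r x] assms by simp

lemma favg_nonneg:
  assumes "\<And>y. f y \<ge> 0"
  shows "favg B f \<ge> 0"
  unfolding favg_def set_lebesgue_integral_def using assms
  by (simp add: Bochner_Integration.integral_nonneg)

lemma favg_add:
  assumes "integrable lebesgue f" "integrable lebesgue g" "B \<in> sets lebesgue"
  shows "favg B (\<lambda>y. f y + g y) = favg B f + favg B g"
proof -
  have "set_integrable lebesgue B f" "set_integrable lebesgue B g"
    using integrable_mult_indicator[OF assms(3) assms(1)] integrable_mult_indicator[OF assms(3) assms(2)]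
    by (simp_all add: set_integrable_def)
  then show ?thesis
    unfolding favg_def by (simp add: set_integral_add(2) add_divide_distrib)
qed

lemma pow_div_powr_eq_powr_diff:
  assumes "r > 0"
  shows "r ^ k / r powr \<alpha> = r powr (real k - \<alpha>)"
  using assms by (simp add: powr_diff powr_realpow)

lemma mult_powr_le_power_mult_powr:
  fixes a s \<alpha> :: real
  assumes "a \<ge> 1" "s > 0" "\<alpha> \<ge> 0"
  shows "(a * s) powr (real n - \<alpha>) \<le> a ^ n * s powr (real n - \<alpha>)"
proof -
  have "a powr (real n - \<alpha>) \<le> a powr real n"
    using assms by (intro powr_mono) auto
  then show ?thesis
    using assms by (simp add: powr_mult powr_realpow)
qed

lemma set_integral_abs_mono_set:
  fixes f :: "'a \<Rightarrow> real"
  assumes "integrable M f" "A \<subseteq> B" "A \<in> sets M" "B \<in> sets M"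
  shows "(LINT y:A|M. \<bar>f y\<bar>) \<le> (LINT y:B|M. \<bar>f y\<bar>)"
  unfolding set_lebesgue_integral_def using assms
  by (intro integral_mono integrable_mult_indicator integrable_abs) (auto split: split_indicator)

lemma set_integral_abs_le_split:
  fixes g h :: "'a \<Rightarrow> real"
  assumes g: "integrable M g" and h: "integrable M h" and "A \<in> fmeasurable M"
    and split: "AE y in M. y \<in> A \<longrightarrow> \<bar>g y\<bar> \<le> a + c * \<bar>h y\<bar>"
  shows "(LINT y:A|M. \<bar>g y\<bar>) \<le> a * measure M A + c * (LINT y:A|M. \<bar>h y\<bar>)"
proof -
  have A: "A \<in> sets M" "emeasure M A < \<infinity>"
    using \<open>A \<in> fmeasurable M\<close> by (auto simp: fmeasurable_def)
  have int_g: "set_integrable M A (\<lambda>y. \<bar>g y\<bar>)"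
    unfolding set_integrable_def using A(1) g by (intro integrable_mult_indicator integrable_abs)
  have int_h: "set_integrable M A (\<lambda>y. \<bar>h y\<bar>)"
    unfolding set_integrable_def using A(1) h by (intro integrable_mult_indicator integrable_abs)
  have int_a: "set_integrable M A (\<lambda>_. a)"
    unfolding set_integrable_def using A by (simp add: integrable_real_indicator)
  have "(LINT y:A|M. \<bar>g y\<bar>) \<le> (LINT y:A|M. a + c * \<bar>h y\<bar>)"
    using split int_g int_h int_a by (intro set_integral_mono_AE set_integral_add) auto
  also have "\<dots> = a * measure M A + c * (LINT y:A|M. \<bar>h y\<bar>)"
    using int_h int_a A by (simp add: set_integral_const)
  finally show ?thesis .
qed

lemma set_integral_ball_le_of_frac_max_le:
  fixes f :: "'a::euclidean_space \<Rightarrow> real" and \<alpha> :: real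
  assumes "frac_max \<alpha> f x \<le> ereal L" "r > 0"
  shows "(LINT y:ball x r|lebesgue. \<bar>f y\<bar>) \<le> L * unit_ball_vol DIM('a) * r powr (real DIM('a) - \<alpha>)"
proof -
  have "ereal (r powr \<alpha> * favg (ball x r) (\<lambda>y. \<bar>f y\<bar>)) \<le> frac_max \<alpha> f x"
    unfolding frac_max_def using assms(2) by (intro SUP_upper) auto
  with assms(1) have "r powr \<alpha> * favg (ball x r) (\<lambda>y. \<bar>f y\<bar>) \<le> L"
    by (meson ereal_less_eq(3) order_trans)
  with assms(2) show ?thesis
    by (simp add: favg_ball field_simps pow_div_powr_eq_powr_diff[symmetric])
qed

lemma set_integral_ball_gt_of_frac_max_gt:
  fixes f :: "'a::euclidean_space \<Rightarrow> real" and \<alpha> :: real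
  assumes "ereal L < frac_max \<alpha> f x"
  obtains r where "r > 0"
    "L * unit_ball_vol DIM('a) * r powr (real DIM('a) - \<alpha>) < (LINT y:ball x r|lebesgue. \<bar>f y\<bar>)"
proof -
  obtain r where r: "r > 0" "L < r powr \<alpha> * favg (ball x r) (\<lambda>y. \<bar>f y\<bar>)"
    using assms unfolding frac_max_def less_SUP_iff by auto
  then show ?thesis
    by (intro that[OF r(1)]) (simp add: favg_ball field_simps pow_div_powr_eq_powr_diff[symmetric])
qed

lemma set_integral_le_of_frac_max_le:
  fixes f :: "'a::euclidean_space \<Rightarrow> real" and \<alpha> :: real
  assumes "frac_max \<alpha> f z \<le> ereal L" "A \<subseteq> ball z s" "A \<in> sets lebesgue" "s > 0"
    and "integrable lebesgue f"
  shows "(LINT y:A|lebesgue. \<bar>f y\<bar>) \<le> L * unit_ball_vol DIM('a) * s powr (real DIM('a) - \<alpha>)"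
  using set_integral_abs_mono_set[OF assms(5,2,3)] set_integral_ball_le_of_frac_max_le[OF assms(1,4)]
  by simp

lemma favg_ball_le_of_frac_max_le:
  fixes f :: "'a::euclidean_space \<Rightarrow> real" and \<alpha> :: real
  assumes "frac_max \<alpha> f z \<le> ereal L" "z \<in> ball \<xi> \<rho>" "\<rho> > 0" "0 \<le> \<alpha>" "L \<ge> 0"
    and "integrable lebesgue f" "\<And>y. f y \<ge> 0"
  shows "favg (ball \<xi> (4 * \<rho>)) f \<le> 5 ^ DIM('a) * L / \<rho> powr \<alpha>"
proof -
  define \<omega> where "\<omega> = unit_ball_vol DIM('a)"
  define I where "I = (LINT y:ball \<xi> (4 * \<rho>)|lebesgue. f y)"
  have \<omega>: "\<omega> > 0"
    by (simp add: \<omega>_def)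
  have "ball \<xi> (4 * \<rho>) \<subseteq> ball z (5 * \<rho>)"
    using assms(2) by (simp add: ball_subset_ball_iff dist_commute)
  then have "I \<le> L * \<omega> * (5 * \<rho>) powr (real DIM('a) - \<alpha>)"
    using set_integral_le_of_frac_max_le[OF assms(1) _ _ _ assms(6)] assms by (simp add: I_def \<omega>_def)
  also have "\<dots> \<le> L * \<omega> * (5 ^ DIM('a) * \<rho> powr (real DIM('a) - \<alpha>))"
    using assms \<omega> by (intro mult_left_mono mult_powr_le_power_mult_powr) auto
  finally have I_le: "I \<le> \<omega> * \<rho> ^ DIM('a) * (5 ^ DIM('a) * L / \<rho> powr \<alpha>)"
    using assms(3) by (simp add: pow_div_powr_eq_powr_diff[symmetric] field_simps)
  have "0 \<le> I"
    unfolding I_def set_lebesgue_integral_def using assms(7)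
    by (simp add: Bochner_Integration.integral_nonneg)
  have "favg (ball \<xi> (4 * \<rho>)) f = I / (\<omega> * (4 * \<rho>) ^ DIM('a))"
    using favg_ball[of "4 * \<rho>"] assms(3) by (simp add: I_def \<omega>_def)
  also have "\<dots> \<le> I / (\<omega> * \<rho> ^ DIM('a))"
    using \<open>0 \<le> I\<close> assms(3) \<omega> by (intro divide_left_mono mult_left_mono power_mono mult_pos_pos) auto
  also have "\<dots> \<le> 5 ^ DIM('a) * L / \<rho> powr \<alpha>"
    using I_le \<omega> assms(3) by (simp add: divide_le_eq mult.commute)
  finally show ?thesis .
qed

section \<open>The weak-type estimate\<close>

lemma add_powr_le_powr_add:
  fixes a b q :: real
  assumes "a \<ge> 0" "b \<ge> 0" "q \<ge> 1"
  shows "a powr q + b powr q \<le> (a + b) powr q"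
proof -
  have le: "x powr q \<le> x * (a + b) powr (q - 1)" if "0 \<le> x" "x \<le> a + b" for x
  proof (cases "x = 0")
    case False
    then have "x powr q = x * x powr (q - 1)"
      using that by (simp add: powr_mult_base)
    also have "\<dots> \<le> x * (a + b) powr (q - 1)"
      using that assms by (intro mult_left_mono powr_mono2) auto
    finally show ?thesis .
  qed simp
  have "a powr q + b powr q \<le> (a + b) * (a + b) powr (q - 1)"
    using le[of a] le[of b] assms by (simp add: distrib_right)
  also have "\<dots> = (a + b) powr q"
    using assms by (cases "a + b = 0") (simp_all add: powr_mult_base)
  finally show ?thesis .
qed

lemma sum_powr_le_powr_sum:
  fixes a :: "'i \<Rightarrow> real" and q :: real
  assumes "finite D" "\<And>i. i \<in> D \<Longrightarrow> a i \<ge> 0" "q \<ge> 1"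
  shows "(\<Sum>i\<in>D. a i powr q) \<le> (\<Sum>i\<in>D. a i) powr q"
  using assms
proof (induction D rule: finite_induct)
  case (insert x D)
  then have "(\<Sum>i\<in>insert x D. a i powr q) \<le> a x powr q + (\<Sum>i\<in>D. a i) powr q"
    by simp
  also have "\<dots> \<le> (\<Sum>i\<in>insert x D. a i) powr q"
    using insert by (simp add: add_powr_le_powr_add sum_nonneg)
  finally show ?case .
qed simp

lemma sum_set_integral_disjoint_le_integral:
  fixes f :: "'a \<Rightarrow> real"
  assumes "integrable M f" "finite D" "disjoint_family_on A D" "\<And>i. i \<in> D \<Longrightarrow> A i \<in> sets M"
  shows "(\<Sum>i\<in>D. LINT y:A i|M. \<bar>f y\<bar>) \<le> (LINT y|M. \<bar>f y\<bar>)"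
proof -
  have "(\<Sum>i\<in>D. LINT y:A i|M. \<bar>f y\<bar>) = (LINT y:(\<Union>i\<in>D. A i)|M. \<bar>f y\<bar>)"
  proof (rule set_integral_finite_UN_AE[symmetric])
    fix i j assume "i \<in> D" "j \<in> D"
    with assms(3) show "AE y in M. y \<in> A i \<and> y \<in> A j \<longrightarrow> i = j"
      unfolding disjoint_family_on_def by (intro AE_I2) blast
    show "set_integrable M (A i) (\<lambda>y. \<bar>f y\<bar>)"
      unfolding set_integrable_def using assms \<open>i \<in> D\<close>
      by (intro integrable_mult_indicator integrable_abs) auto
  qed (use assms in auto)
  also have "\<dots> \<le> (LINT y|M. \<bar>f y\<bar>)"
    unfolding set_lebesgue_integral_def using assms
    by (intro integral_mono integrable_mult_indicator integrable_abs)
       (auto split: split_indicator)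
  finally show ?thesis .
qed

lemma emeasure_countable_UN_le:
  assumes "countable C" "\<And>i. i \<in> C \<Longrightarrow> A i \<in> sets M"
    and "\<And>D. finite D \<Longrightarrow> D \<subseteq> C \<Longrightarrow> (\<Sum>i\<in>D. emeasure M (A i)) \<le> b"
  shows "emeasure M (\<Union>i\<in>C. A i) \<le> b"
proof (cases "C = {}")
  case False
  define g where "g = from_nat_into C"
  have g: "range g = C"
    unfolding g_def using range_from_nat_into[OF False assms(1)] .
  define U where "U k = (\<Union>i\<in>g ` {..k}. A i)" for k
  have "(\<Union>i\<in>C. A i) = (\<Union>k. U k)"
    unfolding U_def g[symmetric] by auto
  moreover have "range U \<subseteq> sets M"
    unfolding U_def using g assms(2) by (auto intro!: sets.finite_UN)
  moreover have "incseq U"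
    unfolding U_def incseq_def by (intro allI impI UN_mono image_mono) auto
  ultimately have "emeasure M (\<Union>i\<in>C. A i) = (SUP k. emeasure M (U k))"
    by (simp add: SUP_emeasure_incseq)
  also have "\<dots> \<le> b"
  proof (rule SUP_least)
    fix k
    have "emeasure M (U k) \<le> (\<Sum>i\<in>g ` {..k}. emeasure M (A i))"
      unfolding U_def using g assms(2) by (intro emeasure_subadditive_finite) auto
    also have "\<dots> \<le> b"
      using g by (intro assms(3)) auto
    finally show "emeasure M (U k) \<le> b" .
  qed
  finally show ?thesis .
qed simp

lemma sum_emeasure_enlarged_balls_le:
  fixes f :: "'a::euclidean_space \<Rightarrow> real" and \<alpha> t :: real
  assumes f: "integrable lebesgue f" and \<alpha>: "0 \<le> \<alpha>" "\<alpha> < DIM('a)" and t: "t > 0"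
    and D: "finite D" "disjoint_family_on (\<lambda>i. ball i (r i)) D" and r: "\<And>i. i \<in> D \<Longrightarrow> r i > 0"
    and heavy: "\<And>i. i \<in> D \<Longrightarrow> t * unit_ball_vol DIM('a) * r i powr (real DIM('a) - \<alpha>)
                                  < (LINT y:ball i (r i)|lebesgue. \<bar>f y\<bar>)"
  shows "(\<Sum>i\<in>D. emeasure lebesgue (ball i (5 * r i))) \<le> ennreal (5 ^ DIM('a) * unit_ball_vol DIM('a) *
           ((LINT y|lebesgue. \<bar>f y\<bar>) / (t * unit_ball_vol DIM('a)))
             powr (real DIM('a) / (real DIM('a) - \<alpha>)))"
proof -
  define n where "n = real DIM('a)"
  define \<omega> where "\<omega> = unit_ball_vol DIM('a)"
  define q where "q = n / (n - \<alpha>)"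
  have \<omega>: "\<omega> > 0" and n\<alpha>: "n - \<alpha> > 0" and q: "q \<ge> 1"
    using \<alpha> by (simp_all add: \<omega>_def n_def q_def)
  have "t * \<omega> * (\<Sum>i\<in>D. r i powr (n - \<alpha>)) \<le> (\<Sum>i\<in>D. LINT y:ball i (r i)|lebesgue. \<bar>f y\<bar>)"
    unfolding sum_distrib_left using heavy by (intro sum_mono less_imp_le) (simp add: \<omega>_def n_def)
  also have "\<dots> \<le> (LINT y|lebesgue. \<bar>f y\<bar>)"
    using D by (intro sum_set_integral_disjoint_le_integral[OF f]) auto
  finally have sum_le: "(\<Sum>i\<in>D. r i powr (n - \<alpha>)) \<le> (LINT y|lebesgue. \<bar>f y\<bar>) / (t * \<omega>)"
    using t \<omega> by (simp add: field_simps)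
  have "(\<Sum>i\<in>D. emeasure lebesgue (ball i (5 * r i)))
      = (\<Sum>i\<in>D. ennreal (5 ^ DIM('a) * \<omega> * (r i powr (n - \<alpha>)) powr q))"
  proof (rule sum.cong[OF refl])
    fix i assume "i \<in> D"
    with r have "r i > 0" .
    with n\<alpha> show "emeasure lebesgue (ball i (5 * r i)) = ennreal (5 ^ DIM('a) * \<omega> * (r i powr (n - \<alpha>)) powr q)"
      by (subst emeasure_lebesgue_ball)
         (simp_all add: \<omega>_def q_def n_def powr_powr powr_realpow power_mult_distrib mult_ac)
  qed
  also have "\<dots> = ennreal (5 ^ DIM('a) * \<omega> * (\<Sum>i\<in>D. (r i powr (n - \<alpha>)) powr q))"
    using \<omega> by (simp add: sum_ennreal sum_distrib_left)
  also have "\<dots> \<le> ennreal (5 ^ DIM('a) * \<omega> * ((LINT y|lebesgue. \<bar>f y\<bar>) / (t * \<omega>)) powr q)"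
    using D(1) r sum_le q \<omega>
    by (intro ennreal_leI mult_left_mono order_trans[OF sum_powr_le_powr_sum powr_mono2])
       (auto intro: sum_nonneg)
  finally show ?thesis
    unfolding \<omega>_def q_def n_def .
qed

(* S need not be measurable (its emeasure is then 0): the bound is proved for a measurable
   cover of S. *)
lemma weak_type_estimate:
  fixes f :: "'a::euclidean_space \<Rightarrow> real" and \<alpha> t :: real
  assumes f: "integrable lebesgue f" and \<alpha>: "0 \<le> \<alpha>" "\<alpha> < DIM('a)" and t: "t > 0"
    and S: "\<And>x. x \<in> S \<Longrightarrow> \<exists>r>0. t * unit_ball_vol DIM('a) * r powr (real DIM('a) - \<alpha>)
                                  < (LINT y:ball x r|lebesgue. \<bar>f y\<bar>)"
  shows "emeasure lebesgue S \<le> ennreal (5 ^ DIM('a) * unit_ball_vol DIM('a) *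
           ((LINT y|lebesgue. \<bar>f y\<bar>) / (t * unit_ball_vol DIM('a)))
             powr (real DIM('a) / (real DIM('a) - \<alpha>)))"
    (is "_ \<le> ?bound")
proof -
  define n where "n = real DIM('a)"
  define \<omega> where "\<omega> = unit_ball_vol DIM('a)"
  define m where "m = (LINT y|lebesgue. \<bar>f y\<bar>) / (t * \<omega>)"
  have \<omega>: "\<omega> > 0" and n\<alpha>: "n - \<alpha> > 0"
    using \<alpha> by (simp_all add: \<omega>_def n_def)
  obtain r where r: "\<And>x. x \<in> S \<Longrightarrow> r x > 0"
    and heavy: "\<And>x. x \<in> S \<Longrightarrow> t * \<omega> * r x powr (n - \<alpha>) < (LINT y:ball x (r x)|lebesgue. \<bar>f y\<bar>)"
    using S unfolding \<omega>_def n_def by metis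
  have r_bound: "r x \<le> m powr (1 / (n - \<alpha>))" if "x \<in> S" for x
  proof -
    have "(LINT y:ball x (r x)|lebesgue. \<bar>f y\<bar>) \<le> (LINT y:UNIV|lebesgue. \<bar>f y\<bar>)"
      by (rule set_integral_abs_mono_set[OF f]) auto
    with heavy[OF that] t \<omega> have "r x powr (n - \<alpha>) \<le> m"
      by (simp add: m_def field_simps set_lebesgue_integral_def)
    then have "(r x powr (n - \<alpha>)) powr (1 / (n - \<alpha>)) \<le> m powr (1 / (n - \<alpha>))"
      using n\<alpha> by (intro powr_mono2) auto
    with r[OF that] n\<alpha> show ?thesis
      by (simp add: powr_powr)
  qed
  have "S \<subseteq> (\<Union>x\<in>S. ball x (r x))"
    using r by force
  then obtain C where C: "countable C" "C \<subseteq> S"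
    and disj: "pairwise (\<lambda>i j. disjnt (ball i (r i)) (ball j (r j))) C"
    and cover: "S \<subseteq> (\<Union>i\<in>C. ball i (5 * r i))"
    by (rule Vitali_covering_lemma_balls[where B = "m powr (1 / (n - \<alpha>))"]) (use r r_bound in auto)
  have "emeasure lebesgue (\<Union>i\<in>C. ball i (5 * r i)) \<le> ?bound"
  proof (rule emeasure_countable_UN_le[OF C(1)])
    fix D assume "finite D" "D \<subseteq> C"
    moreover from this disj have "disjoint_family_on (\<lambda>i. ball i (r i)) D"
      unfolding pairwise_def disjnt_def disjoint_family_on_def by blast
    ultimately show "(\<Sum>i\<in>D. emeasure lebesgue (ball i (5 * r i))) \<le> ?bound"
      using C(2) r heavy unfolding \<omega>_def n_def
      by (intro sum_emeasure_enlarged_balls_le[OF f \<alpha> t]) auto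
  qed auto
  moreover have "emeasure lebesgue S \<le> emeasure lebesgue (\<Union>i\<in>C. ball i (5 * r i))"
    using cover C(1) by (intro emeasure_mono sets.countable_UN') auto
  ultimately show ?thesis
    by order
qed

lemma weak_type_estimate_radius:
  fixes f :: "'a::euclidean_space \<Rightarrow> real" and \<alpha> t c \<rho> :: real
  assumes f: "integrable lebesgue f" and \<alpha>: "0 \<le> \<alpha>" "\<alpha> < DIM('a)" and t: "t > 0"
    and S: "\<And>x. x \<in> S \<Longrightarrow> \<exists>r>0. t * unit_ball_vol DIM('a) * r powr (real DIM('a) - \<alpha>)
                                  < (LINT y:ball x r|lebesgue. \<bar>f y\<bar>)"
    and L1: "(LINT y|lebesgue. \<bar>f y\<bar>) \<le> c * t * unit_ball_vol DIM('a) * \<rho> powr (real DIM('a) - \<alpha>)"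
    and "c \<ge> 0" "\<rho> > 0"
  shows "emeasure lebesgue S \<le> ennreal (5 ^ DIM('a) * unit_ball_vol DIM('a) *
           c powr (real DIM('a) / (real DIM('a) - \<alpha>)) * \<rho> ^ DIM('a))"
proof -
  define n where "n = real DIM('a)"
  define \<omega> where "\<omega> = unit_ball_vol DIM('a)"
  define q where "q = n / (n - \<alpha>)"
  have \<omega>: "\<omega> > 0" and n\<alpha>: "n - \<alpha> > 0" and q: "q \<ge> 0"
    using \<alpha> by (simp_all add: \<omega>_def n_def q_def)
  have "(LINT y|lebesgue. \<bar>f y\<bar>) / (t * \<omega>) \<le> c * \<rho> powr (n - \<alpha>)"
    using L1 t \<omega> by (simp add: \<omega>_def n_def field_simps)
  then have "((LINT y|lebesgue. \<bar>f y\<bar>) / (t * \<omega>)) powr q \<le> (c * \<rho> powr (n - \<alpha>)) powr q"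
    using t \<omega> q by (intro powr_mono2) auto
  also have "\<dots> = c powr q * \<rho> ^ DIM('a)"
    using \<open>c \<ge> 0\<close> \<open>\<rho> > 0\<close> n\<alpha> by (simp add: powr_mult powr_powr q_def n_def powr_realpow)
  finally have "5 ^ DIM('a) * \<omega> * ((LINT y|lebesgue. \<bar>f y\<bar>) / (t * \<omega>)) powr q
      \<le> 5 ^ DIM('a) * \<omega> * c powr q * \<rho> ^ DIM('a)"
    using \<omega> by (simp add: mult.assoc)
  with weak_type_estimate[OF f \<alpha> t S] show ?thesis
    unfolding \<omega>_def q_def n_def by (meson ennreal_leI order_trans)
qed

section \<open>Splitting G by assumption (A2_2)\<close>

lemma comparison_bounds:
  fixes g \<phi> \<psi> b ct :: real
  assumes "g \<le> ct * (\<phi> + \<psi>)" "\<psi> \<le> ct * (g + \<phi>)" "\<phi> \<le> b" "0 \<le> ct"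
  shows "g \<le> ct * b + ct * \<psi>" "\<psi> \<le> ct * g + ct * b"
  using assms mult_left_mono[OF assms(3,4)] by (simp_all add: algebra_simps)

lemma integrable_of_AE_le_indicator_ball:
  fixes g h :: "'a::euclidean_space \<Rightarrow> real"
  assumes "g \<in> borel_measurable lebesgue" "integrable lebesgue h"
    and "AE y in lebesgue. 0 \<le> g y \<and> g y \<le> indicator (ball c r) y * (h y + a)"
  shows "integrable lebesgue g"
proof (rule Bochner_Integration.integrable_bound[OF _ assms(1)])
  have "integrable lebesgue (\<lambda>y. indicator (ball c r) y * h y + a * indicator (ball c r) y)"
    using integrable_mult_indicator[of "ball c r" lebesgue h] assms(2) lmeasurable_ball[of c r]
    by (intro Bochner_Integration.integrable_add integrable_mult_right)
       (simp_all add: integrable_real_indicator fmeasurable_def)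
  then show "integrable lebesgue (\<lambda>y. indicator (ball c r) y * (h y + a))"
    by (simp add: algebra_simps)
  show "AE y in lebesgue. norm (g y) \<le> norm (indicator (ball c r) y * (h y + a))"
    using assms(3) by eventually_elim auto
qed

lemma A2_2_decomposition:
  fixes F G :: "'a::euclidean_space \<Rightarrow> real"
  assumes A2: "A2_2 \<Omega> r0 F G ct CA ceps" and \<nu>: "\<nu> \<in> closure \<Omega>" and R: "0 < R" "R \<le> r0 / 2"
    and \<Omega>: "\<Omega> \<in> sets lebesgue" and F: "integrable lebesgue F" and G: "integrable lebesgue G"
    and nonneg: "\<And>y. 0 \<le> F y \<and> 0 \<le> G y" and G_out: "\<And>y. y \<notin> \<Omega> \<Longrightarrow> G y = 0" and ct: "ct \<ge> 0"
  obtains \<psi> where "integrable lebesgue \<psi>"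
    and "AE y in lebesgue. y \<in> ball \<nu> R \<longrightarrow>
           \<bar>G y\<bar> \<le> ct * max CA 0 * favg (ball \<nu> (2 * R)) (\<lambda>y. G y + F y) + ct * \<bar>\<psi> y\<bar>"
    and "\<And>e. e \<in> {0<..<1} \<Longrightarrow> (LINT y|lebesgue. \<bar>\<psi> y\<bar>)
           \<le> measure lebesgue (ball \<nu> R) * (e * favg (ball \<nu> (2 * R)) G + ceps e * favg (ball \<nu> (2 * R)) F)"
proof -
  define B where "B = ball \<nu> R"
  define Av where "Av = favg (ball \<nu> (2 * R)) (\<lambda>y. G y + F y)"
  define a where "a = ct * max CA 0 * Av"
  obtain \<phi> \<psi> where \<psi>: "\<psi> \<in> borel_measurable lebesgue"
    and nn: "AE y in lebesgue. y \<in> \<Omega> \<inter> B \<longrightarrow> \<phi> y \<ge> 0 \<and> \<psi> y \<ge> 0"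
    and Q: "compQ G \<phi> \<psi> (\<Omega> \<inter> B) ct"
    and avg: "\<forall>e\<in>{0<..<1}. favg B (\<lambda>y. indicator \<Omega> y * \<psi> y)
                \<le> e * favg (ball \<nu> (2 * R)) G + ceps e * favg (ball \<nu> (2 * R)) F"
    and \<phi>_le: "AE y in lebesgue. y \<in> \<Omega> \<inter> B \<longrightarrow> \<bar>\<phi> y\<bar> \<le> CA * Av"
    using A2 \<nu> R unfolding A2_2_def B_def Av_def by fastforce
  define \<psi>' where "\<psi>' y = indicator (\<Omega> \<inter> B) y * \<psi> y" for y
  have "0 \<le> Av"
    unfolding Av_def using nonneg by (intro favg_nonneg) (simp add: add_nonneg_nonneg)
  then have a: "0 \<le> a" and CA_Av: "CA * Av \<le> max CA 0 * Av"
    using ct by (auto simp: a_def intro: mult_right_mono)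
  have pointwise: "AE y in lebesgue. 0 \<le> \<psi>' y \<and> \<psi>' y \<le> indicator B y * (ct * G y + a)
      \<and> (y \<in> B \<longrightarrow> \<bar>G y\<bar> \<le> a + ct * \<bar>\<psi>' y\<bar>)"
    using nn Q \<phi>_le unfolding compQ_def
  proof eventually_elim
    case (elim y)
    show ?case
    proof (cases "y \<in> \<Omega> \<inter> B")
      case True
      with elim CA_Av have "\<phi> y \<le> max CA 0 * Av"
        by linarith
      with True elim comparison_bounds[of "G y" ct "\<phi> y" "\<psi> y"] nonneg[of y] ct show ?thesis
        by (simp add: \<psi>'_def a_def mult.assoc)
    qed (use G_out a nonneg[of y] ct in \<open>auto simp: \<psi>'_def split: split_indicator\<close>)
  qed
  have \<psi>'_meas: "\<psi>' \<in> borel_measurable lebesgue"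
    unfolding \<psi>'_def B_def using \<psi> \<Omega>
    by (intro borel_measurable_times borel_measurable_indicator sets.Int) auto
  have \<psi>'_int: "integrable lebesgue \<psi>'"
    using pointwise unfolding B_def
    by (intro integrable_of_AE_le_indicator_ball[OF \<psi>'_meas integrable_mult_right[OF G]])
       (auto elim: eventually_mono)
  have "(LINT y|lebesgue. \<bar>\<psi>' y\<bar>) = (LINT y|lebesgue. \<psi>' y)"
    using pointwise \<psi>'_meas by (intro integral_cong_AE) (auto elim: eventually_mono)
  also have "\<dots> = measure lebesgue B * favg B (\<lambda>y. indicator \<Omega> y * \<psi> y)"
    using R unfolding \<psi>'_def favg_def set_lebesgue_integral_def
    by (simp add: B_def measure_lebesgue_ball indicator_inter_arith mult_ac)
  finally have \<psi>'_L1: "(LINT y|lebesgue. \<bar>\<psi>' y\<bar>)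
      \<le> measure lebesgue B * (e * favg (ball \<nu> (2 * R)) G + ceps e * favg (ball \<nu> (2 * R)) F)"
    if "e \<in> {0<..<1}" for e
    using avg that by (auto intro: mult_left_mono)
  show ?thesis
  proof (rule that[OF \<psi>'_int])
    show "AE y in lebesgue. y \<in> ball \<nu> R \<longrightarrow>
        \<bar>G y\<bar> \<le> ct * max CA 0 * favg (ball \<nu> (2 * R)) (\<lambda>y. G y + F y) + ct * \<bar>\<psi>' y\<bar>"
      using pointwise unfolding a_def B_def Av_def by (elim eventually_mono) blast
  qed (fact \<psi>'_L1[unfolded B_def])
qed

section \<open>Small radii: the good-lambda step\<close>

lemma heavy_ball_radius_lt:
  fixes G :: "'a::euclidean_space \<Rightarrow> real" and \<alpha> \<sigma> lam \<rho> r :: real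
  assumes \<alpha>: "0 \<le> \<alpha>" and G: "integrable lebesgue G"
    and z: "z \<in> ball \<xi> \<rho>" "frac_max \<alpha> G z \<le> ereal lam" and x: "x \<in> ball \<xi> \<rho>"
    and \<sigma>: "3 ^ DIM('a) < \<sigma>" and lam: "lam > 0" and r: "r > 0"
    and heavy: "\<sigma> * lam * unit_ball_vol DIM('a) * r powr (real DIM('a) - \<alpha>)
                  < (LINT y:ball x r|lebesgue. \<bar>G y\<bar>)"
  shows "r < \<rho>"
proof (rule ccontr)
  define w where "w = lam * unit_ball_vol DIM('a) * r powr (real DIM('a) - \<alpha>)"
  assume "\<not> r < \<rho>"
  moreover have "dist x z < 2 * \<rho>"
    using x z(1) unfolding mem_ball by metric
  ultimately have "ball x r \<subseteq> ball z (3 * r)"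
    by (simp add: ball_subset_ball_iff)
  then have "(LINT y:ball x r|lebesgue. \<bar>G y\<bar>)
      \<le> lam * unit_ball_vol DIM('a) * (3 * r) powr (real DIM('a) - \<alpha>)"
    using set_integral_le_of_frac_max_le[OF z(2) _ _ _ G] r by simp
  also have "\<dots> \<le> 3 ^ DIM('a) * w"
    unfolding w_def using lam r \<alpha> mult_powr_le_power_mult_powr[of 3 r \<alpha> "DIM('a)"]
    by (simp add: mult_left_mono mult.left_commute)
  finally have "\<sigma> * w < 3 ^ DIM('a) * w"
    using heavy by (simp add: w_def mult.assoc)
  with \<sigma> lam r show False
    by (simp add: w_def mult_less_cancel_right)
qed

(* Radii >= rho are excluded by the bound at z, so the heavy ball of G at x lies in
   ball xi (2 rho), where the splitting holds; the constant part a is too small to make it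
   heavy, hence the ball is heavy for psi. *)
lemma good_lambda_heavy_ball:
  fixes G \<psi> :: "'a::euclidean_space \<Rightarrow> real" and \<alpha> a c \<sigma> lam \<rho> :: real
  assumes \<alpha>: "0 \<le> \<alpha>" and G: "integrable lebesgue G" and \<psi>: "integrable lebesgue \<psi>"
    and split: "AE y in lebesgue. y \<in> ball \<xi> (2 * \<rho>) \<longrightarrow> \<bar>G y\<bar> \<le> a + c * \<bar>\<psi> y\<bar>"
    and a: "0 \<le> a" "2 * a * \<rho> powr \<alpha> \<le> \<sigma> * lam" and c: "c > 0"
    and z: "z \<in> ball \<xi> \<rho>" "frac_max \<alpha> G z \<le> ereal lam" and \<sigma>: "3 ^ DIM('a) < \<sigma>" and lam: "lam > 0"
    and x: "x \<in> ball \<xi> \<rho>" "ereal (\<sigma> * lam) < frac_max \<alpha> G x"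
  shows "\<exists>r>0. \<sigma> * lam / (2 * c) * unit_ball_vol DIM('a) * r powr (real DIM('a) - \<alpha>)
                < (LINT y:ball x r|lebesgue. \<bar>\<psi> y\<bar>)"
proof -
  define n where "n = real DIM('a)"
  define \<omega> where "\<omega> = unit_ball_vol DIM('a)"
  have \<omega>: "\<omega> > 0"
    by (simp add: \<omega>_def)
  obtain r where r: "r > 0"
    and heavy: "\<sigma> * lam * \<omega> * r powr (n - \<alpha>) < (LINT y:ball x r|lebesgue. \<bar>G y\<bar>)"
    using set_integral_ball_gt_of_frac_max_gt[OF x(2)] unfolding \<omega>_def n_def by blast
  have "r < \<rho>"
    using heavy_ball_radius_lt[OF \<alpha> G z x(1) \<sigma> lam r] heavy by (simp add: \<omega>_def n_def)
  then have "ball x r \<subseteq> ball \<xi> (2 * \<rho>)"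
    using x(1) by (simp add: ball_subset_ball_iff dist_commute)
  with split have split_x: "AE y in lebesgue. y \<in> ball x r \<longrightarrow> \<bar>G y\<bar> \<le> a + c * \<bar>\<psi> y\<bar>"
    by (elim eventually_mono) blast
  have "r ^ DIM('a) = r powr \<alpha> * r powr (n - \<alpha>)"
    using r by (simp add: n_def powr_realpow[symmetric] powr_add[symmetric])
  also have "\<dots> \<le> \<rho> powr \<alpha> * r powr (n - \<alpha>)"
    using r \<alpha> \<open>r < \<rho>\<close> by (intro mult_right_mono powr_mono2) auto
  finally have r_pow: "r ^ DIM('a) \<le> \<rho> powr \<alpha> * r powr (n - \<alpha>)" .
  have "a * (\<omega> * r ^ DIM('a)) \<le> a * \<rho> powr \<alpha> * \<omega> * r powr (n - \<alpha>)"
    using mult_left_mono[OF r_pow mult_nonneg_nonneg[OF a(1) less_imp_le[OF \<omega>]]] by (simp add: mult_ac)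
  then have "a * measure lebesgue (ball x r) \<le> a * \<rho> powr \<alpha> * \<omega> * r powr (n - \<alpha>)"
    using measure_lebesgue_ball[of r x] r by (simp add: \<omega>_def)
  also have "\<dots> \<le> \<sigma> * lam * \<omega> * r powr (n - \<alpha>) / 2"
    using mult_right_mono[of "a * \<rho> powr \<alpha>" "\<sigma> * lam / 2" "\<omega> * r powr (n - \<alpha>)"] a(2) \<omega>
    by (simp add: mult_ac)
  finally have "a * measure lebesgue (ball x r) \<le> \<sigma> * lam * \<omega> * r powr (n - \<alpha>) / 2" .
  moreover have "(LINT y:ball x r|lebesgue. \<bar>G y\<bar>)
      \<le> a * measure lebesgue (ball x r) + c * (LINT y:ball x r|lebesgue. \<bar>\<psi> y\<bar>)"
    using set_integral_abs_le_split[OF G \<psi> lmeasurable_ball split_x] .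
  ultimately have "\<sigma> * lam * \<omega> * r powr (n - \<alpha>) / 2 < c * (LINT y:ball x r|lebesgue. \<bar>\<psi> y\<bar>)"
    using heavy by linarith
  then show ?thesis
    using r c by (intro exI[of _ r]) (simp add: \<omega>_def n_def field_simps)
qed

lemma favg_bounds_of_frac_max_le:
  fixes F G :: "'a::euclidean_space \<Rightarrow> real" and \<alpha> \<kappa> lam \<rho> :: real
  assumes \<alpha>: "0 \<le> \<alpha>" and F: "integrable lebesgue F" and G: "integrable lebesgue G"
    and nonneg: "\<And>y. 0 \<le> F y \<and> 0 \<le> G y" and \<rho>: "\<rho> > 0" and lam: "lam > 0" and \<kappa>: "0 < \<kappa>" "\<kappa> \<le> 1"
    and z1: "z1 \<in> ball \<xi> \<rho>" "frac_max \<alpha> G z1 \<le> ereal lam"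
    and z2: "z2 \<in> ball \<xi> \<rho>" "frac_max \<alpha> F z2 \<le> ereal (\<kappa> * lam)"
  shows "favg (ball \<xi> (4 * \<rho>)) G \<le> 5 ^ DIM('a) * lam / \<rho> powr \<alpha>"
    and "favg (ball \<xi> (4 * \<rho>)) F \<le> \<kappa> * (5 ^ DIM('a) * lam / \<rho> powr \<alpha>)"
    and "favg (ball \<xi> (4 * \<rho>)) (\<lambda>y. G y + F y) \<le> 2 * (5 ^ DIM('a) * lam / \<rho> powr \<alpha>)"
proof -
  show G_le: "favg (ball \<xi> (4 * \<rho>)) G \<le> 5 ^ DIM('a) * lam / \<rho> powr \<alpha>"
    using favg_ball_le_of_frac_max_le[OF z1(2,1) \<rho> \<alpha>] lam G nonneg by auto
  show F_le: "favg (ball \<xi> (4 * \<rho>)) F \<le> \<kappa> * (5 ^ DIM('a) * lam / \<rho> powr \<alpha>)"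
    using favg_ball_le_of_frac_max_le[OF z2(2,1) \<rho> \<alpha>] \<kappa> lam F nonneg by (auto simp: mult.left_commute)
  have "0 \<le> 5 ^ DIM('a) * lam / \<rho> powr \<alpha>"
    using lam by simp
  with G_le F_le \<kappa> show "favg (ball \<xi> (4 * \<rho>)) (\<lambda>y. G y + F y) \<le> 2 * (5 ^ DIM('a) * lam / \<rho> powr \<alpha>)"
    using favg_add[OF G F] mult_left_le_one_le[of "5 ^ DIM('a) * lam / \<rho> powr \<alpha>" \<kappa>] by simp
qed

lemma A2_2_decomposition_at_scale:
  fixes F G :: "'a::euclidean_space \<Rightarrow> real" and \<alpha> \<epsilon> \<kappa> lam \<rho> :: real
  assumes \<alpha>: "0 \<le> \<alpha>" and ct: "ct \<ge> 1"
    and F: "integrable lebesgue F" and G: "integrable lebesgue G"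
    and nonneg: "\<And>y. 0 \<le> F y \<and> 0 \<le> G y" and G_out: "\<And>y. y \<notin> \<Omega> \<Longrightarrow> G y = 0"
    and \<Omega>: "\<Omega> \<in> sets lebesgue" and A2: "A2_2 \<Omega> r0 F G ct CA ceps"
    and \<xi>: "\<xi> \<in> closure \<Omega>" and \<rho>: "\<rho> > 0" "4 * \<rho> \<le> r0" and lam: "lam > 0"
    and z1: "z1 \<in> ball \<xi> \<rho>" "frac_max \<alpha> G z1 \<le> ereal lam"
    and z2: "z2 \<in> ball \<xi> \<rho>" "frac_max \<alpha> F z2 \<le> ereal (\<kappa> * lam)"
    and \<epsilon>: "0 < \<epsilon>" "\<epsilon> < 1" and \<kappa>: "0 < \<kappa>" "\<kappa> \<le> 1" "ceps (\<epsilon> / 2) * \<kappa> \<le> \<epsilon> / 2"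
  obtains a \<psi> where "0 \<le> a" "a * \<rho> powr \<alpha> \<le> 2 * 5 ^ DIM('a) * ct * max CA 0 * lam"
    and "integrable lebesgue \<psi>"
    and "AE y in lebesgue. y \<in> ball \<xi> (2 * \<rho>) \<longrightarrow> \<bar>G y\<bar> \<le> a + ct * \<bar>\<psi> y\<bar>"
    and "(LINT y|lebesgue. \<bar>\<psi> y\<bar>) \<le> \<epsilon> * 10 ^ DIM('a) * lam * unit_ball_vol DIM('a)
                                        * \<rho> powr (real DIM('a) - \<alpha>)"
proof -
  define \<omega> where "\<omega> = unit_ball_vol DIM('a)"
  define X where "X = 5 ^ DIM('a) * lam / \<rho> powr \<alpha>"
  define a where "a = ct * max CA 0 * favg (ball \<xi> (4 * \<rho>)) (\<lambda>y. G y + F y)"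
  have X: "X \<ge> 0"
    using lam by (simp add: X_def)
  note avg = favg_bounds_of_frac_max_le[OF \<alpha> F G nonneg \<rho>(1) lam \<kappa>(1,2) z1 z2, folded X_def]
  obtain \<psi> where \<psi>: "integrable lebesgue \<psi>"
    and split: "AE y in lebesgue. y \<in> ball \<xi> (2 * \<rho>) \<longrightarrow> \<bar>G y\<bar> \<le> a + ct * \<bar>\<psi> y\<bar>"
    and L1: "\<And>e. e \<in> {0<..<1} \<Longrightarrow> (LINT y|lebesgue. \<bar>\<psi> y\<bar>) \<le> measure lebesgue (ball \<xi> (2 * \<rho>))
               * (e * favg (ball \<xi> (4 * \<rho>)) G + ceps e * favg (ball \<xi> (4 * \<rho>)) F)"
    using A2_2_decomposition[OF A2 \<xi> _ _ \<Omega> F G nonneg G_out, of "2 * \<rho>"] \<rho> ct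
    unfolding a_def by auto
  have "0 \<le> favg (ball \<xi> (4 * \<rho>)) (\<lambda>y. G y + F y)"
    using nonneg by (intro favg_nonneg) (simp add: add_nonneg_nonneg)
  then have "0 \<le> a"
    using ct by (simp add: a_def)
  have "a * \<rho> powr \<alpha> \<le> ct * max CA 0 * (2 * X) * \<rho> powr \<alpha>"
    using avg(3) ct unfolding a_def by (intro mult_right_mono mult_left_mono) auto
  also have "\<dots> = 2 * 5 ^ DIM('a) * ct * max CA 0 * lam"
    using \<rho> by (simp add: X_def)
  finally have a: "a * \<rho> powr \<alpha> \<le> 2 * 5 ^ DIM('a) * ct * max CA 0 * lam" .
  have "ceps (\<epsilon> / 2) > 0"
    using A2 \<epsilon> unfolding A2_2_def by auto
  then have "ceps (\<epsilon> / 2) * favg (ball \<xi> (4 * \<rho>)) F \<le> ceps (\<epsilon> / 2) * \<kappa> * X"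
    using avg(2) by (simp add: mult.assoc mult_left_mono)
  also have "\<dots> \<le> \<epsilon> / 2 * X"
    using \<kappa>(3) X by (rule mult_right_mono)
  finally have F_part: "ceps (\<epsilon> / 2) * favg (ball \<xi> (4 * \<rho>)) F \<le> \<epsilon> / 2 * X" .
  have "(LINT y|lebesgue. \<bar>\<psi> y\<bar>) \<le> \<omega> * (2 * \<rho>) ^ DIM('a)
      * (\<epsilon> / 2 * favg (ball \<xi> (4 * \<rho>)) G + ceps (\<epsilon> / 2) * favg (ball \<xi> (4 * \<rho>)) F)"
    using L1[of "\<epsilon> / 2"] \<epsilon> \<rho> measure_lebesgue_ball[of "2 * \<rho>" \<xi>] by (simp add: \<omega>_def)
  also have "\<dots> \<le> \<omega> * (2 * \<rho>) ^ DIM('a) * (\<epsilon> / 2 * X + \<epsilon> / 2 * X)"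
    using avg(1) F_part \<epsilon> \<rho> by (intro mult_left_mono add_mono) (auto simp: \<omega>_def)
  also have "\<dots> = \<epsilon> * 10 ^ DIM('a) * lam * \<omega> * \<rho> powr (real DIM('a) - \<alpha>)"
  proof -
    have "(10::real) ^ DIM('a) = 2 ^ DIM('a) * 5 ^ DIM('a)"
      by (simp flip: power_mult_distrib)
    with \<rho> show ?thesis
      by (simp add: X_def pow_div_powr_eq_powr_diff[symmetric] power_mult_distrib field_simps)
  qed
  finally show ?thesis
    using that[OF \<open>0 \<le> a\<close> a \<psi> split] by (simp add: \<omega>_def)
qed

lemma level_set_estimate_small_radius:
  fixes F G :: "'a::euclidean_space \<Rightarrow> real" and \<alpha> \<epsilon> \<kappa> \<sigma> lam \<rho> :: real
  assumes \<alpha>: "0 \<le> \<alpha>" "\<alpha> < DIM('a)" and ct: "ct \<ge> 1"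
    and F: "integrable lebesgue F" and G: "integrable lebesgue G"
    and nonneg: "\<And>y. 0 \<le> F y \<and> 0 \<le> G y" and G_out: "\<And>y. y \<notin> \<Omega> \<Longrightarrow> G y = 0"
    and \<Omega>: "\<Omega> \<in> sets lebesgue" and A2: "A2_2 \<Omega> r0 F G ct CA ceps"
    and \<xi>: "\<xi> \<in> closure \<Omega>" and \<rho>: "\<rho> > 0" "4 * \<rho> \<le> r0" and lam: "lam > 0"
    and z1: "z1 \<in> ball \<xi> \<rho>" "frac_max \<alpha> G z1 \<le> ereal lam"
    and z2: "z2 \<in> ball \<xi> \<rho>" "frac_max \<alpha> F z2 \<le> ereal (\<kappa> * lam)"
    and \<epsilon>: "0 < \<epsilon>" "\<epsilon> < 1" and \<kappa>: "0 < \<kappa>" "\<kappa> \<le> 1" "ceps (\<epsilon> / 2) * \<kappa> \<le> \<epsilon> / 2"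
    and \<sigma>3: "3 ^ DIM('a) < \<sigma>" and \<sigma>4: "4 * 5 ^ DIM('a) * ct * max CA 0 \<le> \<sigma>"
  shows "dist_fn \<alpha> G (\<Omega> \<inter> ball \<xi> \<rho>) (\<sigma> * lam) \<le> ennreal (5 ^ DIM('a) * unit_ball_vol DIM('a) *
           (2 * ct * 10 ^ DIM('a) * (\<epsilon> / \<sigma>)) powr (real DIM('a) / (real DIM('a) - \<alpha>)) * \<rho> ^ DIM('a))"
proof -
  obtain a \<psi> where a: "0 \<le> a" "a * \<rho> powr \<alpha> \<le> 2 * 5 ^ DIM('a) * ct * max CA 0 * lam"
    and \<psi>: "integrable lebesgue \<psi>"
    and split: "AE y in lebesgue. y \<in> ball \<xi> (2 * \<rho>) \<longrightarrow> \<bar>G y\<bar> \<le> a + ct * \<bar>\<psi> y\<bar>"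
    and \<psi>_L1: "(LINT y|lebesgue. \<bar>\<psi> y\<bar>)
                \<le> \<epsilon> * 10 ^ DIM('a) * lam * unit_ball_vol DIM('a) * \<rho> powr (real DIM('a) - \<alpha>)"
    by (rule A2_2_decomposition_at_scale[OF \<alpha>(1) ct F G nonneg G_out \<Omega> A2 \<xi> \<rho> lam z1 z2 \<epsilon> \<kappa>])
  have \<sigma>_pos: "\<sigma> > 0"
    using \<sigma>3 zero_less_power[of "3::real" "DIM('a)"] by linarith
  have "2 * a * \<rho> powr \<alpha> \<le> \<sigma> * lam"
    using a(2) \<sigma>4 lam mult_right_mono[OF \<sigma>4, of lam] by linarith
  then have heavy: "\<exists>r>0. \<sigma> * lam / (2 * ct) * unit_ball_vol DIM('a) * r powr (real DIM('a) - \<alpha>)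
                          < (LINT y:ball x r|lebesgue. \<bar>\<psi> y\<bar>)"
    if "x \<in> {x \<in> \<Omega> \<inter> ball \<xi> \<rho>. ereal (\<sigma> * lam) < frac_max \<alpha> G x}" for x
    using good_lambda_heavy_ball[OF \<alpha>(1) G \<psi> split a(1) _ _ z1 \<sigma>3 lam] that ct by auto
  have "(LINT y|lebesgue. \<bar>\<psi> y\<bar>) \<le> 2 * ct * 10 ^ DIM('a) * (\<epsilon> / \<sigma>) * (\<sigma> * lam / (2 * ct))
      * unit_ball_vol DIM('a) * \<rho> powr (real DIM('a) - \<alpha>)"
    using \<psi>_L1 ct \<sigma>_pos by (simp add: field_simps)
  moreover have "0 \<le> 2 * ct * 10 ^ DIM('a) * (\<epsilon> / \<sigma>)" "0 < \<sigma> * lam / (2 * ct)"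
    using ct \<epsilon> \<sigma>_pos lam by simp_all
  ultimately show ?thesis
    unfolding dist_fn_def using weak_type_estimate_radius[OF \<psi> \<alpha> _ heavy _ _ \<rho>(1)] by blast
qed

section \<open>Large radii and the choice of kappa\<close>

lemma level_set_estimate_large_radius:
  fixes F G :: "'a::euclidean_space \<Rightarrow> real" and \<alpha> \<kappa> \<sigma> \<epsilon> lam \<rho> s D :: real
  assumes \<alpha>: "0 \<le> \<alpha>" "\<alpha> < DIM('a)" and F: "integrable lebesgue F" and G: "integrable lebesgue G"
    and F_supp: "\<And>y. y \<notin> ball z D \<Longrightarrow> F y = 0" and D: "D > 0"
    and z: "frac_max \<alpha> F z \<le> ereal (\<kappa> * lam)" and \<kappa>: "\<kappa> > 0" and lam: "lam > 0"
    and \<sigma>: "\<sigma> > 0" and \<epsilon>: "\<epsilon> \<ge> 0" and \<rho>: "\<rho> > 0" and s: "0 < s" "s \<le> \<rho>"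
    and \<kappa>_small: "\<kappa> * (LINT y|lebesgue. \<bar>G y\<bar>) * D powr (real DIM('a) - \<alpha>)
                  \<le> \<epsilon> * s powr (real DIM('a) - \<alpha>) * (LINT y|lebesgue. \<bar>F y\<bar>)"
  shows "dist_fn \<alpha> G E (\<sigma> * lam) \<le> ennreal (5 ^ DIM('a) * unit_ball_vol DIM('a) *
           (\<epsilon> / \<sigma>) powr (real DIM('a) / (real DIM('a) - \<alpha>)) * \<rho> ^ DIM('a))"
proof -
  define n where "n = real DIM('a)"
  define \<omega> where "\<omega> = unit_ball_vol DIM('a)"
  have "(LINT y|lebesgue. \<bar>F y\<bar>) = (LINT y:ball z D|lebesgue. \<bar>F y\<bar>)"
    unfolding set_lebesgue_integral_def using F_supp
    by (intro Bochner_Integration.integral_cong) (auto split: split_indicator)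
  also have "\<dots> \<le> \<kappa> * lam * \<omega> * D powr (n - \<alpha>)"
    using set_integral_ball_le_of_frac_max_le[OF z D] by (simp add: \<omega>_def n_def)
  finally have F_L1: "(LINT y|lebesgue. \<bar>F y\<bar>) \<le> \<kappa> * lam * \<omega> * D powr (n - \<alpha>)" .
  have "s powr (n - \<alpha>) \<le> \<rho> powr (n - \<alpha>)"
    using s \<alpha> by (intro powr_mono2) (auto simp: n_def)
  then have "\<epsilon> * s powr (n - \<alpha>) * (LINT y|lebesgue. \<bar>F y\<bar>)
      \<le> \<epsilon> * \<rho> powr (n - \<alpha>) * (\<kappa> * lam * \<omega> * D powr (n - \<alpha>))"
    using F_L1 \<epsilon> by (intro mult_mono mult_left_mono) auto
  with \<kappa>_small have "(\<kappa> * D powr (n - \<alpha>)) * (LINT y|lebesgue. \<bar>G y\<bar>)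
      \<le> (\<kappa> * D powr (n - \<alpha>)) * (\<epsilon> / \<sigma> * (\<sigma> * lam) * \<omega> * \<rho> powr (n - \<alpha>))"
    using \<sigma> by (simp add: n_def mult_ac)
  then have G_L1: "(LINT y|lebesgue. \<bar>G y\<bar>) \<le> \<epsilon> / \<sigma> * (\<sigma> * lam) * \<omega> * \<rho> powr (n - \<alpha>)"
    using \<kappa> D by (simp add: mult_le_cancel_left_pos)
  have level: "\<exists>r>0. \<sigma> * lam * \<omega> * r powr (n - \<alpha>) < (LINT y:ball x r|lebesgue. \<bar>G y\<bar>)"
    if "x \<in> {x \<in> E. ereal (\<sigma> * lam) < frac_max \<alpha> G x}" for x
    using that set_integral_ball_gt_of_frac_max_gt[of "\<sigma> * lam" \<alpha> G x]
    unfolding \<omega>_def n_def by auto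
  show ?thesis
    unfolding dist_fn_def
    using \<sigma> lam \<epsilon> \<rho>
    by (intro weak_type_estimate_radius[OF G \<alpha> _ level[unfolded \<omega>_def n_def]
          G_L1[unfolded \<omega>_def n_def]]) auto
qed

lemma integral_eq_0_of_favg_le:
  fixes F G :: "'a::euclidean_space \<Rightarrow> real"
  assumes \<Omega>: "open \<Omega>" "bounded \<Omega>" and out: "\<And>x. x \<notin> \<Omega> \<Longrightarrow> F x = 0 \<and> G x = 0"
    and G: "\<And>x. G x \<ge> 0" and global: "favg \<Omega> G \<le> C * favg \<Omega> F"
    and F0: "(LINT x|lebesgue. F x) = 0"
  shows "(LINT x|lebesgue. G x) = 0"
proof (cases "\<Omega> = {}")
  case False
  then obtain \<xi> e where e: "e > 0" "ball \<xi> e \<subseteq> \<Omega>"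
    using \<Omega>(1) open_contains_ball by blast
  then have "0 < measure lebesgue (ball \<xi> e)"
    by (simp add: measure_lebesgue_ball)
  also have "\<dots> \<le> measure lebesgue \<Omega>"
    using e \<Omega> by (intro measure_mono_fmeasurable lmeasurable_open) auto
  finally have \<Omega>_pos: "measure lebesgue \<Omega> > 0" .
  have on_\<Omega>: "(LINT x:\<Omega>|lebesgue. f x) = (LINT x|lebesgue. f x)"
    if "\<And>x. x \<notin> \<Omega> \<Longrightarrow> f x = 0" for f :: "'a \<Rightarrow> real"
    unfolding set_lebesgue_integral_def using that
    by (intro Bochner_Integration.integral_cong) (auto split: split_indicator)
  have "favg \<Omega> G \<le> 0"
    using global F0 on_\<Omega>[of F] out by (simp add: favg_def)
  then have "(LINT x|lebesgue. G x) \<le> 0"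
    using \<Omega>_pos on_\<Omega>[of G] out by (simp add: favg_def divide_le_0_iff)
  moreover have "(LINT x|lebesgue. G x) \<ge> 0"
    using G by (simp add: Bochner_Integration.integral_nonneg)
  ultimately show ?thesis
    by linarith
qed (use out in simp)

lemma exists_pos_mult_le:
  fixes a b :: real
  assumes "0 \<le> a" "0 \<le> b" "b = 0 \<Longrightarrow> a = 0"
  obtains k where "k > 0" "k * a \<le> b"
proof (cases "b = 0")
  case False
  with assms have "b / (a + 1) > 0" "b / (a + 1) * a \<le> b"
    by (auto simp: field_simps)
  then show ?thesis
    using that by blast
qed (use assms that[of 1] in auto)

lemma level_set_estimate_given_kappa:
  fixes F G :: "'a::euclidean_space \<Rightarrow> real" and \<alpha> \<epsilon> \<kappa> \<sigma> lam \<rho> D :: real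
  assumes ct: "ct \<ge> 1" and \<alpha>: "0 \<le> \<alpha>" "\<alpha> < DIM('a)" and \<Omega>: "open \<Omega>"
    and F: "integrable lebesgue F" and G: "integrable lebesgue G"
    and nonneg: "\<And>x. 0 \<le> F x \<and> 0 \<le> G x" and out: "\<And>x. x \<notin> \<Omega> \<Longrightarrow> F x = 0 \<and> G x = 0"
    and A2: "A2_2 \<Omega> r0 F G ct CA ceps" and r0: "r0 > 0" and D: "D > 0" "\<And>z. z \<in> \<Omega> \<Longrightarrow> \<Omega> \<subseteq> ball z D"
    and \<epsilon>: "0 < \<epsilon>" "\<epsilon> < 1" and \<kappa>: "0 < \<kappa>" "\<kappa> \<le> 1" "ceps (\<epsilon> / 2) * \<kappa> \<le> \<epsilon> / 2"
    and \<kappa>_small: "\<kappa> * (LINT y|lebesgue. \<bar>G y\<bar>) * D powr (real DIM('a) - \<alpha>)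
                  \<le> \<epsilon> * (r0 / 4) powr (real DIM('a) - \<alpha>) * (LINT y|lebesgue. \<bar>F y\<bar>)"
    and \<xi>: "\<xi> \<in> \<Omega>" and \<rho>: "\<rho> > 0" and lam: "lam > 0"
    and z1: "z1 \<in> ball \<xi> \<rho>" "frac_max \<alpha> G z1 \<le> ereal lam"
    and z2: "z2 \<in> \<Omega> \<inter> ball \<xi> \<rho>" "frac_max \<alpha> F z2 \<le> ereal (\<kappa> * lam)"
    and \<sigma>: "\<sigma> > 3 ^ DIM('a) + 4 * 5 ^ DIM('a) * ct * max CA 0"
  shows "dist_fn \<alpha> G (\<Omega> \<inter> ball \<xi> \<rho>) (\<sigma> * lam) \<le> ennreal (5 ^ DIM('a) * unit_ball_vol DIM('a) *
           (2 * ct * 10 ^ DIM('a)) powr (real DIM('a) / (real DIM('a) - \<alpha>)) *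
           (\<epsilon> / \<sigma>) powr (real DIM('a) / (real DIM('a) - \<alpha>)) * \<rho> ^ DIM('a))"
proof -
  define q where "q = real DIM('a) / (real DIM('a) - \<alpha>)"
  define K where "K = 2 * ct * 10 ^ DIM('a)"
  have "1 * 1 \<le> (2 * ct) * 10 ^ DIM('a)"
    using ct by (intro mult_mono) auto
  then have K: "K \<ge> 1"
    by (simp add: K_def)
  have "0 \<le> 4 * 5 ^ DIM('a) * ct * max CA 0" "(0::real) < 3 ^ DIM('a)"
    using ct by simp_all
  then have \<sigma>3: "3 ^ DIM('a) < \<sigma>" and \<sigma>4: "4 * 5 ^ DIM('a) * ct * max CA 0 \<le> \<sigma>" and \<sigma>_pos: "\<sigma> > 0"
    using \<sigma> by linarith+
  have q: "q \<ge> 0"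
    using \<alpha> by (simp add: q_def)
  have "dist_fn \<alpha> G (\<Omega> \<inter> ball \<xi> \<rho>) (\<sigma> * lam)
      \<le> ennreal (5 ^ DIM('a) * unit_ball_vol DIM('a) * (K * (\<epsilon> / \<sigma>)) powr q * \<rho> ^ DIM('a))"
  proof (cases "4 * \<rho> \<le> r0")
    case True
    show ?thesis
      using level_set_estimate_small_radius[OF \<alpha> ct F G nonneg _ _ A2 _ \<rho> True lam z1 _ z2(2) \<epsilon> \<kappa> \<sigma>3 \<sigma>4]
        out \<Omega> \<xi> z2(1) closure_subset
      unfolding K_def q_def by auto
  next
    case False
    have "F y = 0" if "y \<notin> ball z2 D" for y
      using that D(2) z2(1) out by blast
    then have "dist_fn \<alpha> G (\<Omega> \<inter> ball \<xi> \<rho>) (\<sigma> * lam)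
        \<le> ennreal (5 ^ DIM('a) * unit_ball_vol DIM('a) * (\<epsilon> / \<sigma>) powr q * \<rho> ^ DIM('a))"
      using level_set_estimate_large_radius[OF \<alpha> F G _ D(1) z2(2) \<kappa>(1) lam \<sigma>_pos _ \<rho> _ _ \<kappa>_small]
        False r0 \<epsilon>
      unfolding q_def by auto
    also have "\<dots> \<le> ennreal (5 ^ DIM('a) * unit_ball_vol DIM('a) * (K * (\<epsilon> / \<sigma>)) powr q * \<rho> ^ DIM('a))"
    proof -
      have "\<epsilon> / \<sigma> \<le> K * (\<epsilon> / \<sigma>)"
        using K \<epsilon> \<sigma>_pos mult_right_mono[of 1 K "\<epsilon> / \<sigma>"] by simp
      then have "(\<epsilon> / \<sigma>) powr q \<le> (K * (\<epsilon> / \<sigma>)) powr q"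
        using q \<epsilon> \<sigma>_pos by (intro powr_mono2) auto
      then show ?thesis
        using \<rho> by (intro ennreal_leI mult_right_mono mult_left_mono) auto
    qed
    finally show ?thesis .
  qed
  also have "(K * (\<epsilon> / \<sigma>)) powr q = K powr q * (\<epsilon> / \<sigma>) powr q"
    using K \<epsilon> \<sigma>_pos by (simp add: powr_mult del: times_divide_eq_right)
  finally show ?thesis
    unfolding K_def q_def by (simp add: mult.assoc)
qed

lemma level_set_estimate:
  fixes \<Omega> :: "'a::euclidean_space set" and F G :: "'a \<Rightarrow> real" and \<alpha> \<epsilon> :: real
  assumes ct: "ct \<ge> 1" and \<alpha>: "0 \<le> \<alpha>" "\<alpha> < DIM('a)" and \<Omega>: "open \<Omega>" "bounded \<Omega>" and r0: "r0 > 0"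
    and F: "integrable lebesgue F" and G: "integrable lebesgue G"
    and nonneg: "\<And>x. 0 \<le> F x \<and> 0 \<le> G x" and out: "\<And>x. x \<notin> \<Omega> \<Longrightarrow> F x = 0 \<and> G x = 0"
    and A2: "A2_2 \<Omega> r0 F G ct CA ceps" and global: "favg \<Omega> G \<le> Cstar * favg \<Omega> F"
    and \<epsilon>: "0 < \<epsilon>" "\<epsilon> < 1"
  obtains \<kappa> where "0 < \<kappa>" "\<kappa> < \<epsilon>"
    and "\<And>\<xi> \<rho> lam z1 z2 \<sigma>. \<xi> \<in> \<Omega> \<Longrightarrow> \<rho> > 0 \<Longrightarrow> lam > 0 \<Longrightarrow>
           z1 \<in> ball \<xi> \<rho> \<Longrightarrow> frac_max \<alpha> G z1 \<le> ereal lam \<Longrightarrow>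
           z2 \<in> \<Omega> \<inter> ball \<xi> \<rho> \<Longrightarrow> frac_max \<alpha> F z2 \<le> ereal (\<kappa> * lam) \<Longrightarrow>
           \<sigma> > 3 ^ DIM('a) + 4 * 5 ^ DIM('a) * ct * max CA 0 \<Longrightarrow>
           dist_fn \<alpha> G (\<Omega> \<inter> ball \<xi> \<rho>) (\<sigma> * lam) \<le> ennreal (5 ^ DIM('a) * unit_ball_vol DIM('a) *
             (2 * ct * 10 ^ DIM('a)) powr (real DIM('a) / (real DIM('a) - \<alpha>)) *
             (\<epsilon> / \<sigma>) powr (real DIM('a) / (real DIM('a) - \<alpha>)) * \<rho> ^ DIM('a))"
proof -
  define n where "n = real DIM('a)"
  define D where "D = diameter \<Omega> + 1"
  have D: "D > 0" "\<And>z. z \<in> \<Omega> \<Longrightarrow> \<Omega> \<subseteq> ball z D"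
    using diameter_ge_0[OF \<Omega>(2)] diameter_bounded_bound[OF \<Omega>(2)] by (force simp: D_def)+
  define NF where "NF = (LINT y|lebesgue. \<bar>F y\<bar>)"
  define NG where "NG = (LINT y|lebesgue. \<bar>G y\<bar>)"
  have NF: "NF \<ge> 0" and NG: "NG \<ge> 0"
    by (simp_all add: NF_def NG_def)
  have "NG = 0" if "NF = 0"
  proof -
    have "\<bar>F y\<bar> = F y" "\<bar>G y\<bar> = G y" for y
      using nonneg[of y] by simp_all
    with that integral_eq_0_of_favg_le[OF \<Omega> out _ global] nonneg show ?thesis
      by (simp add: NF_def NG_def)
  qed
  \<comment> \<open>kappa3 takes care of the radii beyond r0/4; the global comparison is used only here,
    to exclude NF = 0 < NG.\<close>
  then have "NG * D powr (n - \<alpha>) = 0" if "\<epsilon> * (r0 / 4) powr (n - \<alpha>) * NF = 0"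
    using that \<epsilon> r0 by simp
  then obtain \<kappa>3 where \<kappa>3: "\<kappa>3 > 0" "\<kappa>3 * (NG * D powr (n - \<alpha>)) \<le> \<epsilon> * (r0 / 4) powr (n - \<alpha>) * NF"
    using NF NG \<epsilon> r0 exists_pos_mult_le[of "NG * D powr (n - \<alpha>)" "\<epsilon> * (r0 / 4) powr (n - \<alpha>) * NF"]
    by auto
  have "ceps (\<epsilon> / 2) > 0"
    using A2 \<epsilon> unfolding A2_2_def by auto
  define \<kappa> where "\<kappa> = min (\<epsilon> / 2) (min (\<epsilon> / (2 * ceps (\<epsilon> / 2))) \<kappa>3)"
  have "\<kappa> \<le> \<epsilon> / 2" "\<kappa> \<le> \<epsilon> / (2 * ceps (\<epsilon> / 2))" "\<kappa> \<le> \<kappa>3"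
    by (simp_all add: \<kappa>_def)
  then have \<kappa>: "0 < \<kappa>" "\<kappa> < \<epsilon>" "\<kappa> \<le> 1" "ceps (\<epsilon> / 2) * \<kappa> \<le> \<epsilon> / 2"
    using \<epsilon> \<kappa>3 \<open>ceps (\<epsilon> / 2) > 0\<close> by (auto simp: \<kappa>_def field_simps)
  have "\<kappa> * (NG * D powr (n - \<alpha>)) \<le> \<kappa>3 * (NG * D powr (n - \<alpha>))"
    using NG \<open>\<kappa> \<le> \<kappa>3\<close> by (intro mult_right_mono) auto
  with \<kappa>3 have \<kappa>_small: "\<kappa> * NG * D powr (n - \<alpha>) \<le> \<epsilon> * (r0 / 4) powr (n - \<alpha>) * NF"
    by (simp add: mult.assoc)
  show ?thesis
    using level_set_estimate_given_kappa[OF ct \<alpha> \<Omega>(1) F G nonneg out A2 r0 D \<epsilon> \<kappa>(1,3,4)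
        \<kappa>_small[unfolded NF_def NG_def n_def]]
    by (rule that[OF \<kappa>(1,2)])
qed

theorem mainTheorem8:
  fixes ct :: real
  assumes dim: "CARD('n::finite) \<ge> 2"
    and ct1: "ct \<ge> 1"
  shows
   "\<forall>\<alpha>\<in>{0..<real CARD('n)}. \<exists>C>0. \<forall>CA::real. \<exists>\<sigma>0>0.
      \<forall>(\<Omega>::(real^'n) set) r0 (F::real^'n \<Rightarrow> real) (G::real^'n \<Rightarrow> real) ceps Cstar.
        open \<Omega> \<and> bounded \<Omega> \<and> r0 > 0 \<and>
        integrable lebesgue F \<and> integrable lebesgue G \<and>
        (\<forall>x. F x \<ge> 0 \<and> G x \<ge> 0) \<and> (\<forall>x. x \<notin> \<Omega> \<longrightarrow> F x = 0 \<and> G x = 0) \<and>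
        A2_2 \<Omega> r0 F G ct CA ceps \<and>
        favg \<Omega> G \<le> Cstar * favg \<Omega> F
        \<longrightarrow>
        (\<forall>\<epsilon>\<in>{0<..<1}. \<exists>\<kappa>. 0 < \<kappa> \<and> \<kappa> < \<epsilon> \<and>
           (\<forall>\<xi>\<in>\<Omega>. \<forall>\<rho>>0. \<forall>lam>0.
              (\<exists>z1\<in>\<Omega> \<inter> ball \<xi> \<rho>. \<exists>z2\<in>\<Omega> \<inter> ball \<xi> \<rho>.
                 frac_max \<alpha> G z1 \<le> ereal lam \<and> frac_max \<alpha> F z2 \<le> ereal (\<kappa> * lam))
              \<longrightarrow> (\<forall>\<sigma>>\<sigma>0.
                    dist_fn \<alpha> G (\<Omega> \<inter> ball \<xi> \<rho>) (\<sigma> * lam)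
                      \<le> ennreal (C * (\<epsilon> / \<sigma>) powr (real CARD('n) / (real CARD('n) - \<alpha>))
                                   * \<rho> ^ CARD('n)))))"
proof (intro ballI, goal_cases)
  case (1 \<alpha>)
  then have \<alpha>: "0 \<le> \<alpha>" "\<alpha> < DIM(real^'n)"
    by simp_all
  define C where "C = 5 ^ CARD('n) * unit_ball_vol CARD('n) *
    (2 * ct * 10 ^ CARD('n)) powr (real CARD('n) / (real CARD('n) - \<alpha>))"
  have "C > 0"
    using ct1 by (simp add: C_def)
  show ?case
  proof (rule exI[of _ C], intro conjI allI, goal_cases)
    case (2 CA)
    define \<sigma>0 where "\<sigma>0 = 3 ^ CARD('n) + 4 * 5 ^ CARD('n) * ct * max CA 0"
    have "\<sigma>0 > 0"
      using ct1 unfolding \<sigma>0_def by (intro add_pos_nonneg) auto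
    show ?case
    proof (rule exI[of _ \<sigma>0], intro conjI allI impI ballI, goal_cases)
      case (2 \<Omega> r0 F G ceps Cstar \<epsilon>)
      then obtain \<kappa> where "0 < \<kappa>" "\<kappa> < \<epsilon>" and estimate: "\<And>\<xi> \<rho> lam z1 z2 \<sigma>.
          \<xi> \<in> \<Omega> \<Longrightarrow> \<rho> > 0 \<Longrightarrow> lam > 0 \<Longrightarrow> z1 \<in> ball \<xi> \<rho> \<Longrightarrow> frac_max \<alpha> G z1 \<le> ereal lam \<Longrightarrow>
          z2 \<in> \<Omega> \<inter> ball \<xi> \<rho> \<Longrightarrow> frac_max \<alpha> F z2 \<le> ereal (\<kappa> * lam) \<Longrightarrow> \<sigma> > \<sigma>0 \<Longrightarrow>
          dist_fn \<alpha> G (\<Omega> \<inter> ball \<xi> \<rho>) (\<sigma> * lam)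
            \<le> ennreal (C * (\<epsilon> / \<sigma>) powr (real CARD('n) / (real CARD('n) - \<alpha>)) * \<rho> ^ CARD('n))"
        using level_set_estimate[OF ct1 \<alpha>, of \<Omega> r0 F G CA ceps Cstar \<epsilon>]
        unfolding C_def \<sigma>0_def by auto
      then show ?case
        by blast
    qed (rule \<open>\<sigma>0 > 0\<close>)
  qed (rule \<open>C > 0\<close>)
qed

end
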